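(* Let $\mathbf m\in M_{(b_i);(c_j)}$, let $i\in[1,n]$, $j\in[1,n']$ and let $a\in B_i$ with $w_{\mathbf m}(a)\in C_j$. Let $\mathbf e$ be the $n\times n'$ matrix with $e_{i,j}=1$ and all other entries $0$, so that $\mathbf m-\mathbf e\in M_{(\tilde b_{i'});(\tilde c_{j'})}$ where $\tilde b_{i'}=b_{i'}-\delta_{i,i'}$, $\tilde c_{j'}=c_{j'}-\delta_{j,j'}$. Then (1) $w_{\mathbf m}^{\hat a}=w_{\mathbf m-\mathbf e}$ (the latter defined in $S_{d-1}$ with respect to the tuples $(\tilde b_{i'}),(\tilde c_{j'})$); (2) $\ell(\mathbf m)-\ell(\mathbf m-\mathbf e)$ equals each of $m_{\le i,\ge j}+m_{\ge i,\le j}-m_{i,j}-1$, $\;m_{\le i-1,\ge j}+m_{\ge i+1,\le j}+b_i-1$, and $\;m_{\le i,\ge j+1}+m_{\ge i,\le j-1}+c_j-1$.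
   Context: Let $d\ge1$ and let $(b_i)_{i\in[1,n]}$, $(c_j)_{j\in[1,n']}$ be tuples of nonnegative integers each summing to $d$. $M_{(b_i);(c_j)}$ is the set of $n\times n'$ matrices with entries in $\mathbb N$, row sums $b_i$ and column sums $c_j$. Partial sums: $m_{\le i,\ge j}=\sum_{i'\le i,\,j'\ge j}m_{i',j'}$, $m_{\ge i,\le j}=\sum_{i'\ge i,\,j'\le j}m_{i',j'}$ (empty sums are $0$). Partition $[1,d]$ into consecutive (possibly empty) intervals $B_1<\dots<B_n$ with $|B_i|=b_i$ and $C_1<\dots<C_{n'}$ with $|C_j|=c_j$. $S_d$ is the symmetric group (Coxeter generators adjacent transpositions, length $\ell$). With $S_{(b_i)},S_{(c_j)}$ the subgroups preserving each $B_i$, resp. each $C_j$, the map $\psi(w)_{i,j}=|w(B_i)\cap C_j|$ induces a bijection $S_{(c_j)}\backslash S_d/S_{(b_i)}\to M_{(b_i);(c_j)}$; $w_{\mathbf m}$ is the longest element of the double coset corresponding to $\mathbf m$, and $\ell(\mathbf m)=\ell(w_{\mathbf m})$. For $a\in[1,d]$ let $\sigma_a:[1,d]\setminus\{a\}\to[1,d-1]$ be the order-preserving bijection, and for $w\in S_d$ set $w^{\hat a}=\sigma_{w(a)}\circ w\circ\sigma_a^{-1}\in S_{d-1}$. *)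

theory Defs
  imports "HOL-Combinatorics.Combinatorics"
begin

(* Tuples (b_i)_{i in [1,n]} are functions nat => nat, only the values on [1,n] matter.
   Matrices are functions nat => nat => nat, entries outside [1,n]x[1,n'] are 0. *)

definition Blk :: "(nat \<Rightarrow> nat) \<Rightarrow> nat \<Rightarrow> nat set" where
  "Blk b i = {(\<Sum>k\<in>{1..<i}. b k) + 1 .. (\<Sum>k\<in>{1..i}. b k)}"

definition matset :: "nat \<Rightarrow> nat \<Rightarrow> (nat \<Rightarrow> nat) \<Rightarrow> (nat \<Rightarrow> nat) \<Rightarrow> (nat \<Rightarrow> nat \<Rightarrow> nat) set" where
  "matset n n' b c = {m. (\<forall>i\<in>{1..n}. (\<Sum>j\<in>{1..n'}. m i j) = b i)
                       \<and> (\<forall>j\<in>{1..n'}. (\<Sum>i\<in>{1..n}. m i j) = c j)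
                       \<and> (\<forall>i j. \<not>(i \<in> {1..n} \<and> j \<in> {1..n'}) \<longrightarrow> m i j = 0)}"

definition psi :: "nat \<Rightarrow> nat \<Rightarrow> (nat \<Rightarrow> nat) \<Rightarrow> (nat \<Rightarrow> nat) \<Rightarrow> (nat \<Rightarrow> nat) \<Rightarrow> nat \<Rightarrow> nat \<Rightarrow> nat" where
  "psi n n' b c w = (\<lambda>i j. if i \<in> {1..n} \<and> j \<in> {1..n'}
                           then card (w ` Blk b i \<inter> Blk c j) else 0)"

definition clen :: "nat \<Rightarrow> (nat \<Rightarrow> nat) \<Rightarrow> nat" where
  "clen d w = (LEAST k. \<exists>ss. length ss = k \<and> set ss \<subseteq> {1..<d}
                  \<and> w = foldr (\<lambda>s f. transpose s (Suc s) \<circ> f) ss id)"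

definition dcoset :: "nat \<Rightarrow> nat \<Rightarrow> nat \<Rightarrow> (nat \<Rightarrow> nat) \<Rightarrow> (nat \<Rightarrow> nat) \<Rightarrow> (nat \<Rightarrow> nat \<Rightarrow> nat) \<Rightarrow> (nat \<Rightarrow> nat) set" where
  "dcoset d n n' b c m = {w. w permutes {1..d} \<and> psi n n' b c w = m}"

definition wlong :: "nat \<Rightarrow> nat \<Rightarrow> nat \<Rightarrow> (nat \<Rightarrow> nat) \<Rightarrow> (nat \<Rightarrow> nat) \<Rightarrow> (nat \<Rightarrow> nat \<Rightarrow> nat) \<Rightarrow> nat \<Rightarrow> nat" where
  "wlong d n n' b c m = (THE w. w \<in> dcoset d n n' b c m \<and>
        (\<forall>w'\<in>dcoset d n n' b c m. clen d w' \<le> clen d w))"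

definition mlen :: "nat \<Rightarrow> nat \<Rightarrow> nat \<Rightarrow> (nat \<Rightarrow> nat) \<Rightarrow> (nat \<Rightarrow> nat) \<Rightarrow> (nat \<Rightarrow> nat \<Rightarrow> nat) \<Rightarrow> nat" where
  "mlen d n n' b c m = clen d (wlong d n n' b c m)"

definition sig :: "nat \<Rightarrow> nat \<Rightarrow> nat" where
  "sig a x = (if x < a then x else x - 1)"

definition siginv :: "nat \<Rightarrow> nat \<Rightarrow> nat" where
  "siginv a y = (if y < a then y else y + 1)"

definition hat :: "(nat \<Rightarrow> nat) \<Rightarrow> nat \<Rightarrow> nat \<Rightarrow> nat" where
  "hat w a = sig (w a) \<circ> w \<circ> siginv a"

definition msLG :: "nat \<Rightarrow> (nat \<Rightarrow> nat \<Rightarrow> nat) \<Rightarrow> nat \<Rightarrow> nat \<Rightarrow> nat" where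
  "msLG n' m i j = (\<Sum>i'\<in>{1..i}. \<Sum>j'\<in>{j..n'}. m i' j')"

definition msGL :: "nat \<Rightarrow> (nat \<Rightarrow> nat \<Rightarrow> nat) \<Rightarrow> nat \<Rightarrow> nat \<Rightarrow> nat" where
  "msGL n m i j = (\<Sum>i'\<in>{i..n}. \<Sum>j'\<in>{1..j}. m i' j')"

end

theory Submission
  imports Defs
begin

(* The longest element w of a double coset is the unique element that is decreasing on every
   block B_i and whose inverse is decreasing on every block C_j: an ascent inside a block is
   removed by an adjacent transposition that stays in the double coset and adds one inversion,
   and the Coxeter length is the number of inversions.  Uniqueness follows by induction on d,
   deleting the point d, whose image is forced to be the first point of the first block C_j met
   by the row of d.
   Deleting a from w preserves both monotonicity properties and lowers the entry m_{i,j} by one,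
   so w^a is again a longest element.  The inversions of w through a are, by the monotonicity,
   the points of B_{<i} sent into C_{>=j}, the points of B_{>i} sent into C_{<=j} and the
   b_i - 1 other points of B_i; this is the second formula, and the row and column sums of m
   turn it into the other two. *)

section \<open>Blocks\<close>

abbreviation psum :: "(nat \<Rightarrow> nat) \<Rightarrow> nat \<Rightarrow> nat" where
  "psum b k \<equiv> \<Sum>t\<in>{1..k}. b t"

lemma psum_pred: "1 \<le> i \<Longrightarrow> psum b i = psum b (i - 1) + b i"
  by (cases i) auto

lemma Blk_iff: "x \<in> Blk b i \<longleftrightarrow> psum b (i - 1) < x \<and> x \<le> psum b i"
proof -
  have "{1..<i} = {1..i - 1}" by auto
  then show ?thesis unfolding Blk_def by auto
qed

lemma finite_Blk [simp]: "finite (Blk b i)"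
  unfolding Blk_def by simp

lemma card_Blk:
  assumes "1 \<le> i"
  shows "card (Blk b i) = b i"
proof -
  have "Blk b i = {psum b (i - 1) + 1..psum b i}" by (auto simp: Blk_iff)
  then show ?thesis using psum_pred[OF assms, of b] by simp
qed

lemma Blk_less: "x \<in> Blk b i \<Longrightarrow> y \<in> Blk b i' \<Longrightarrow> i < i' \<Longrightarrow> x < y"
  using sum_mono2[of "{1..i' - 1}" "{1..i}" b] unfolding Blk_iff by fastforce

lemma Blk_unique: "x \<in> Blk b i \<Longrightarrow> x \<in> Blk b i' \<Longrightarrow> i = i'"
  by (meson Blk_less less_irrefl nat_neq_iff)

lemma Blk_convex: "x \<in> Blk b i \<Longrightarrow> y \<in> Blk b i \<Longrightarrow> x \<le> z \<Longrightarrow> z \<le> y \<Longrightarrow> z \<in> Blk b i"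
  unfolding Blk_iff by auto

lemma mem_BlkD: "a \<in> Blk b i \<Longrightarrow> 1 \<le> i \<and> 1 \<le> b i"
  unfolding Blk_iff by (cases i) auto

lemma psum_in_Blk: "1 \<le> i \<Longrightarrow> 1 \<le> b i \<Longrightarrow> psum b i \<in> Blk b i"
  using psum_pred[of i b] unfolding Blk_iff by simp

lemma Blk_subset: "i \<le> n \<Longrightarrow> Blk b i \<subseteq> {1..psum b n}"
  using sum_mono2[of "{1..n}" "{1..i}" b] by (auto simp: Blk_iff)

lemma Blk_cover: "x \<in> {1..psum b n} \<Longrightarrow> \<exists>i\<in>{1..n}. x \<in> Blk b i"
proof (induction n)
  case (Suc n)
  show ?case
  proof (cases "x \<le> psum b n")
    case True
    with Suc show ?thesis by force
  next
    case False
    with Suc.prems have "x \<in> Blk b (Suc n)" unfolding Blk_iff by simp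
    then show ?thesis by auto
  qed
qed simp

lemma sum_fun_upd_pred:
  fixes b :: "'a \<Rightarrow> nat"
  assumes "finite A" and "1 \<le> b i"
  shows "sum (b(i := b i - 1)) A = sum b A - (if i \<in> A then 1 else 0)"
proof (cases "i \<in> A")
  case True
  have "sum (b(i := b i - 1)) (A - {i}) = sum b (A - {i})"
    by (rule sum.cong) auto
  then show ?thesis
    using sum.remove[OF assms(1) True, of b] sum.remove[OF assms(1) True, of "b(i := b i - 1)"]
      True assms(2) by simp
next
  case False
  then have "sum (b(i := b i - 1)) A = sum b A"
    by (intro sum.cong) auto
  with False show ?thesis by simp
qed

lemma psum_fun_upd_pred:
  "1 \<le> b i \<Longrightarrow> psum (b(i := b i - 1)) k = psum b k - (if 1 \<le> i \<and> i \<le> k then 1 else 0)"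
  using sum_fun_upd_pred[of "{1..k}" b i] by simp

section \<open>Coxeter length and inversions\<close>

definition inversions :: "nat \<Rightarrow> (nat \<Rightarrow> nat) \<Rightarrow> (nat \<times> nat) set" where
  "inversions d w = {(x, y). x \<in> {1..d} \<and> y \<in> {1..d} \<and> x < y \<and> w y < w x}"

lemma finite_inversions [simp]: "finite (inversions d w)"
  by (rule finite_subset[of _ "{1..d} \<times> {1..d}"]) (auto simp: inversions_def)

lemma permutes_in_interval: "w permutes {1..d} \<Longrightarrow> x \<in> {1..d} \<Longrightarrow> w x \<in> {1..d}"
  by (metis permutes_in_image)

lemma permutes_eq_iff: "w permutes S \<Longrightarrow> w x = w y \<longleftrightarrow> x = y"
  using permutes_inj[of w S] by (auto dest: injD)

lemma transpose_less_iff: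
  "u \<noteq> v \<Longrightarrow> {u, v} \<noteq> {t, Suc t} \<Longrightarrow> transpose t (Suc t) u < transpose t (Suc t) v \<longleftrightarrow> u < v"
  by (auto simp: transpose_def doubleton_eq_iff)

lemma card_inversions_transpose_left:
  assumes inj: "inj_on w {1..d}" and PQ: "P \<in> {1..d}" "Q \<in> {1..d}" "P < Q"
    and t: "{w P, w Q} = {t, Suc t}"
  shows "card (inversions d (transpose t (Suc t) \<circ> w)) =
           (if (P, Q) \<in> inversions d w then card (inversions d w) - 1 else card (inversions d w) + 1)"
proof -
  let ?v = "transpose t (Suc t) \<circ> w"
  have same: "?v y < ?v x \<longleftrightarrow> w y < w x"
    if "x \<in> {1..d}" "y \<in> {1..d}" "x < y" "(x, y) \<noteq> (P, Q)" for x y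
  proof -
    have "{y, x} \<noteq> {P, Q}"
      using that PQ by (auto simp: doubleton_eq_iff)
    then have "{w y, w x} \<noteq> {w P, w Q}"
      using inj_on_image_eq_iff[OF inj, of "{y, x}" "{P, Q}"] that PQ by auto
    moreover have "w y \<noteq> w x" using that inj_on_contraD[OF inj] by auto
    ultimately show ?thesis using t transpose_less_iff by simp
  qed
  have rest: "inversions d ?v - {(P, Q)} = inversions d w - {(P, Q)}"
    using same by (auto simp: inversions_def)
  have flip: "(P, Q) \<in> inversions d ?v \<longleftrightarrow> (P, Q) \<notin> inversions d w"
    using t PQ by (auto simp: inversions_def doubleton_eq_iff)
  show ?thesis
  proof (cases "(P, Q) \<in> inversions d w")
    case True
    then have "inversions d ?v = inversions d w - {(P, Q)}" using flip rest by blast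
    with True show ?thesis by simp
  next
    case False
    then have "inversions d ?v = insert (P, Q) (inversions d w)" using flip rest by blast
    with False show ?thesis by simp
  qed
qed

lemma card_inversions_inv:
  assumes w: "w permutes {1..d}"
  shows "card (inversions d (inv w)) = card (inversions d w)"
proof -
  let ?f = "\<lambda>(x, y). (w y, w x)"
  have "inversions d (inv w) = ?f ` inversions d w"
  proof (intro set_eqI iffI)
    fix z assume "z \<in> inversions d (inv w)"
    then obtain u v where z: "z = (u, v)" and uv: "u \<in> {1..d}" "v \<in> {1..d}" "u < v" "inv w v < inv w u"
      by (auto simp: inversions_def)
    have "(inv w v, inv w u) \<in> inversions d w"
      using uv permutes_in_interval[OF permutes_inv[OF w]] by (simp add: inversions_def permutes_inverses[OF w])
    moreover have "z = ?f (inv w v, inv w u)" using z by (simp add: permutes_inverses[OF w])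
    ultimately show "z \<in> ?f ` inversions d w" by blast
  next
    fix z assume "z \<in> ?f ` inversions d w"
    then obtain x y where z: "z = (w y, w x)" and xy: "(x, y) \<in> inversions d w" by auto
    then have "x \<in> {1..d}" "y \<in> {1..d}" by (auto simp: inversions_def)
    with xy show "z \<in> inversions d (inv w)"
      using z permutes_in_interval[OF w] by (auto simp: inversions_def permutes_inverses[OF w])
  qed
  moreover have "inj_on ?f (inversions d w)"
    by (rule inj_onI) (auto simp: permutes_eq_iff[OF w])
  ultimately show ?thesis by (simp add: card_image)
qed

(* Passing to inverses turns right multiplication into left multiplication. *)
lemma card_inversions_transpose_right:
  assumes w: "w permutes {1..d}" and p: "p \<in> {1..d}" "Suc p \<in> {1..d}" and less: "w p < w (Suc p)"
  shows "card (inversions d (w \<circ> transpose p (Suc p))) = card (inversions d w) + 1"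
proof -
  let ?u = "inv w"
  have u: "?u permutes {1..d}" by (rule permutes_inv[OF w])
  have "inv (w \<circ> transpose p (Suc p)) = transpose p (Suc p) \<circ> ?u"
    using permutes_bij[OF w] by (simp add: o_inv_distrib bij_transpose)
  moreover have "(w p, w (Suc p)) \<notin> inversions d ?u"
    by (simp add: inversions_def permutes_inverses[OF w])
  ultimately have "card (inversions d (inv (w \<circ> transpose p (Suc p)))) = card (inversions d ?u) + 1"
    using card_inversions_transpose_left[OF permutes_inj_on[OF u] permutes_in_interval[OF w p(1)]
        permutes_in_interval[OF w p(2)] less, of p]
    by (simp add: permutes_inverses[OF w])
  then show ?thesis
    using card_inversions_inv[OF u] card_inversions_inv[OF permutes_compose[OF permutes_swap_id[OF p] w]]
      card_inversions_inv[OF w] by simp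
qed

lemma inversions_empty_imp_id:
  assumes w: "w permutes {1..d}" and empty: "inversions d w = {}"
  shows "w = id"
proof (rule ccontr)
  assume "w \<noteq> id"
  then have "\<exists>x. w x \<noteq> x" by auto
  then obtain x where x: "w x \<noteq> x" and least: "\<And>y. y < x \<Longrightarrow> w y = y"
    using ex_has_least_nat[of "\<lambda>x. w x \<noteq> x" _ id] by (metis id_apply not_le)
  have xD: "x \<in> {1..d}" using x w by (meson permutes_not_in)
  have "\<not> w x < x" using least[of "w x"] x permutes_eq_iff[OF w] by auto
  then have gt: "x < w x" using x by simp
  let ?y = "inv w x"
  have y: "?y \<in> {1..d}" "w ?y = x" using permutes_in_interval[OF permutes_inv[OF w] xD]
    by (simp_all add: permutes_inverses[OF w])
  have "x < ?y" using least[of ?y] y(2) x by (metis linorder_neqE_nat)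
  then have "(x, ?y) \<in> inversions d w" using xD y gt by (simp add: inversions_def)
  with empty show False by simp
qed

(* An inversion (x, y) with the least gap w x - w y has gap 1. *)
lemma inversion_imp_adjacent_inversion:
  assumes w: "w permutes {1..d}" and inv: "inversions d w \<noteq> {}"
  shows "\<exists>P Q. P \<in> {1..d} \<and> Q \<in> {1..d} \<and> P < Q \<and> w P = Suc (w Q)"
proof -
  obtain z where "z \<in> inversions d w" using inv by blast
  then obtain x y where xy: "(x, y) \<in> inversions d w"
    and least: "\<And>x' y'. (x', y') \<in> inversions d w \<Longrightarrow> w x - w y \<le> w x' - w y'"
    using ex_has_least_nat[of "\<lambda>(x, y). (x, y) \<in> inversions d w" z "\<lambda>(x, y). w x - w y"] by auto
  have x: "x \<in> {1..d}" and y: "y \<in> {1..d}" and "x < y" "w y < w x"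
    using xy by (auto simp: inversions_def)
  show ?thesis
  proof (cases "w x = Suc (w y)")
    case False
    let ?r = "inv w (Suc (w y))"
    have "Suc (w y) \<in> {1..d}" using permutes_in_interval[OF w x] \<open>w y < w x\<close> by auto
    then have r: "?r \<in> {1..d}" "w ?r = Suc (w y)"
      using permutes_in_interval[OF permutes_inv[OF w]] by (simp_all add: permutes_inverses[OF w])
    have "\<not> y < ?r"
    proof
      assume "y < ?r"
      then have "(x, ?r) \<in> inversions d w"
        using x r \<open>x < y\<close> \<open>w y < w x\<close> False by (auto simp: inversions_def)
      with least[of x ?r] r(2) \<open>w y < w x\<close> show False by simp
    qed
    moreover have "?r \<noteq> y" using r(2) by auto
    ultimately show ?thesis using r y by (metis linorder_neqE_nat)
  qed (use x y \<open>x < y\<close> in blast)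
qed

abbreviation adjacent_product :: "nat list \<Rightarrow> nat \<Rightarrow> nat" where
  "adjacent_product ss \<equiv> foldr (\<lambda>s f. transpose s (Suc s) \<circ> f) ss id"

lemma adjacent_product_permutes:
  "set ss \<subseteq> {1..<d} \<Longrightarrow>
    adjacent_product ss permutes {1..d} \<and> card (inversions d (adjacent_product ss)) \<le> length ss"
proof (induction ss)
  case Nil
  have "inversions d id = {}" by (auto simp: inversions_def)
  then show ?case using permutes_id[of "{1..d}"] by (simp add: id_def)
next
  case (Cons s ss)
  let ?f = "adjacent_product ss"
  have "set ss \<subseteq> {1..<d}" using Cons.prems by simp
  then have f: "?f permutes {1..d}" and len: "card (inversions d ?f) \<le> length ss"
    using Cons.IH by blast+
  have s: "s \<in> {1..d}" "Suc s \<in> {1..d}" using Cons.prems by auto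
  let ?P = "inv ?f s" and ?Q = "inv ?f (Suc s)"
  have PQ: "?P \<in> {1..d}" "?Q \<in> {1..d}" "?f ?P = s" "?f ?Q = Suc s"
    using permutes_in_interval[OF permutes_inv[OF f]] s by (simp_all add: permutes_inverses[OF f])
  have "card (inversions d (transpose s (Suc s) \<circ> ?f)) \<le> card (inversions d ?f) + 1"
  proof (cases "?P < ?Q")
    case True
    then show ?thesis
      using card_inversions_transpose_left[OF permutes_inj_on[OF f] PQ(1,2) True, of s] PQ by auto
  next
    case False
    then have "?Q < ?P" using PQ by (metis Suc_n_not_n linorder_neqE_nat)
    then show ?thesis
      using card_inversions_transpose_left[OF permutes_inj_on[OF f] PQ(2,1), of s] PQ
      by (auto simp: insert_commute)
  qed
  with len have "card (inversions d (adjacent_product (s # ss))) \<le> length (s # ss)" by simp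
  moreover have "adjacent_product (s # ss) permutes {1..d}"
    using permutes_compose[OF f permutes_swap_id[OF s]] by simp
  ultimately show ?case by blast
qed

lemma exists_reduced_adjacent_product:
  "w permutes {1..d} \<Longrightarrow>
    \<exists>ss. length ss = card (inversions d w) \<and> set ss \<subseteq> {1..<d} \<and> w = adjacent_product ss"
proof (induction "card (inversions d w)" arbitrary: w)
  case 0
  then have "w = id" using inversions_empty_imp_id by simp
  then show ?case using 0 by (intro exI[of _ "[]"]) simp
next
  case (Suc k)
  then have "inversions d w \<noteq> {}" by auto
  then obtain P Q where PQ: "P \<in> {1..d}" "Q \<in> {1..d}" "P < Q" "w P = Suc (w Q)"
    using inversion_imp_adjacent_inversion[OF Suc.prems] by blast
  let ?t = "w Q"
  have t: "?t \<in> {1..d}" "Suc ?t \<in> {1..d}"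
    using permutes_in_interval[OF Suc.prems PQ(1)] permutes_in_interval[OF Suc.prems PQ(2)] PQ(4)
    by simp_all
  let ?v = "transpose ?t (Suc ?t) \<circ> w"
  have "(P, Q) \<in> inversions d w" using PQ by (simp add: inversions_def)
  then have "card (inversions d ?v) = k"
    using card_inversions_transpose_left[OF permutes_inj_on[OF Suc.prems] PQ(1-3), of ?t] PQ(4)
      Suc.hyps(2) by (simp add: insert_commute)
  moreover have "?v permutes {1..d}" by (rule permutes_compose[OF Suc.prems permutes_swap_id[OF t]])
  ultimately obtain ss where ss: "length ss = k" "set ss \<subseteq> {1..<d}" "?v = adjacent_product ss"
    using Suc.hyps(1) by metis
  have "w = transpose ?t (Suc ?t) \<circ> ?v" by (simp add: fun_eq_iff)
  then have "w = adjacent_product (?t # ss)" using ss(3) by simp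
  then show ?case using ss(1,2) t Suc.hyps(2) by (intro exI[of _ "?t # ss"]) auto
qed

lemma clen_eq_card_inversions:
  assumes "w permutes {1..d}"
  shows "clen d w = card (inversions d w)"
  unfolding clen_def
proof (rule Least_equality)
  show "\<exists>ss. length ss = card (inversions d w) \<and> set ss \<subseteq> {1..<d} \<and> w = adjacent_product ss"
    using exists_reduced_adjacent_product[OF assms] .
  show "card (inversions d w) \<le> k"
    if "\<exists>ss. length ss = k \<and> set ss \<subseteq> {1..<d} \<and> w = adjacent_product ss" for k
    using that adjacent_product_permutes by blast
qed

section \<open>Deleting a point\<close>

lemma sig_siginv [simp]: "sig a (siginv a y) = y"
  unfolding sig_def siginv_def by auto

lemma siginv_sig [simp]: "x \<noteq> a \<Longrightarrow> siginv a (sig a x) = x"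
  unfolding sig_def siginv_def by auto

lemma siginv_neq [simp]: "siginv a y \<noteq> a"
  unfolding siginv_def by auto

lemma sig_eq_iff: "x \<noteq> a \<Longrightarrow> y \<noteq> a \<Longrightarrow> sig a x = sig a y \<longleftrightarrow> x = y"
  unfolding sig_def by auto

lemma sig_less_iff: "x \<noteq> a \<Longrightarrow> y \<noteq> a \<Longrightarrow> sig a x < sig a y \<longleftrightarrow> x < y"
  unfolding sig_def by auto

lemma siginv_less_iff: "siginv a x < siginv a y \<longleftrightarrow> x < y"
  unfolding siginv_def by auto

lemma inj_on_sig: "inj_on (sig a) (- {a})"
  by (rule inj_onI) (simp add: sig_eq_iff)

lemma siginv_in_interval: "y \<in> {1..d - 1} \<Longrightarrow> a \<in> {1..d} \<Longrightarrow> siginv a y \<in> {1..d}"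
  unfolding siginv_def by auto

lemma sig_in_interval: "x \<in> {1..d} \<Longrightarrow> a \<in> {1..d} \<Longrightarrow> x \<noteq> a \<Longrightarrow> sig a x \<in> {1..d - 1}"
  unfolding sig_def by auto

lemma sig_in_Blk_pred_iff:
  assumes a: "a \<in> Blk b i" and x: "x \<noteq> a"
  shows "sig a x \<in> Blk (b(i := b i - 1)) i' \<longleftrightarrow> x \<in> Blk b i'"
proof -
  have i: "1 \<le> i" "1 \<le> b i" using mem_BlkD[OF a] by auto
  define L R L\<^sub>a R\<^sub>a where "L = psum b (i' - 1)" and "R = psum b i'"
    and "L\<^sub>a = psum b (i - 1)" and "R\<^sub>a = psum b i"
  have "L \<le> R" "i' < i \<Longrightarrow> R \<le> L\<^sub>a" "i < i' \<Longrightarrow> R\<^sub>a \<le> L" "i' = i \<Longrightarrow> L = L\<^sub>a \<and> R = R\<^sub>a"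
    "L\<^sub>a < a" "a \<le> R\<^sub>a"
    using a unfolding L_def R_def L\<^sub>a_def R\<^sub>a_def Blk_iff by (auto intro!: sum_mono2)
  moreover have "R\<^sub>a = L\<^sub>a + b i"
    unfolding L\<^sub>a_def R\<^sub>a_def by (rule psum_pred[OF i(1)])
  moreover have upd: "(1 \<le> i \<and> i \<le> i' - 1) = (i < i')" "(1 \<le> i \<and> i \<le> i') = (i \<le> i')"
    using i(1) by auto
  ultimately show ?thesis
    using x i(2) unfolding Blk_iff psum_fun_upd_pred[where b = b and i = i, OF i(2)] upd
      L_def[symmetric] R_def[symmetric] sig_def
    by (cases i' i rule: linorder_cases; cases "x < a") auto
qed

lemma in_Blk_pred_iff:
  "a \<in> Blk b i \<Longrightarrow> y \<in> Blk (b(i := b i - 1)) i' \<longleftrightarrow> siginv a y \<in> Blk b i'"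
  using sig_in_Blk_pred_iff[of a b i "siginv a y" i'] by simp

lemma hat_apply: "hat w a y = sig (w a) (w (siginv a y))"
  by (simp add: hat_def)

lemma hat_sig: "x \<noteq> a \<Longrightarrow> hat w a (sig a x) = sig (w a) (w x)"
  by (simp add: hat_def)

lemma eq_siginv_hat: "w permutes S \<Longrightarrow> x \<noteq> a \<Longrightarrow> w x = siginv (w a) (hat w a (sig a x))"
  by (simp add: hat_sig permutes_eq_iff)

lemma hat_permutes:
  assumes w: "w permutes {1..d}" and a: "a \<in> {1..d}"
  shows "hat w a permutes {1..d - 1}"
proof (rule inj_imp_permutes)
  show "inj_on (hat w a) {1..d - 1}"
  proof (rule inj_onI)
    fix y y' assume "hat w a y = hat w a y'"
    then have "w (siginv a y) = w (siginv a y')"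
      by (simp add: hat_apply sig_eq_iff permutes_eq_iff[OF w])
    then have "sig a (siginv a y) = sig a (siginv a y')" by (simp add: permutes_eq_iff[OF w])
    then show "y = y'" by simp
  qed
  show "hat w a y \<in> {1..d - 1}" if "y \<in> {1..d - 1}" for y
    unfolding hat_apply
    by (rule sig_in_interval) (use that a permutes_in_interval[OF w] siginv_in_interval
        permutes_eq_iff[OF w] in auto)
  show "hat w a y = y" if "y \<notin> {1..d - 1}" for y
  proof -
    have "w (siginv a y) = siginv a y" "w a \<in> {1..d}"
      using that a permutes_not_in[OF w] permutes_in_interval[OF w] by (auto simp: siginv_def)
    with that a show ?thesis by (auto simp: hat_apply siginv_def sig_def)
  qed
qed simp

lemma exists_permutes_hat_eq:
  assumes u: "u permutes {1..d}" and a: "a \<in> {1..Suc d}" and v: "v \<in> {1..Suc d}"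
  shows "\<exists>w. w permutes {1..Suc d} \<and> w a = v \<and> hat w a = u"
proof -
  define w where "w x = (if x = a then v else siginv v (u (sig a x)))" for x
  have w_other: "w x = siginv v (u (sig a x))" if "x \<noteq> a" for x
    using that by (simp add: w_def)
  have "w permutes {1..Suc d}"
  proof (rule inj_imp_permutes)
    show "inj_on w {1..Suc d}"
    proof (rule inj_onI)
      fix x y assume eq: "w x = w y"
      show "x = y"
      proof (cases "x = a \<or> y = a")
        case True
        with eq show ?thesis by (metis siginv_neq w_def)
      next
        case False
        with eq have "u (sig a x) = u (sig a y)"
          by (metis sig_siginv w_other)
        with False show ?thesis by (simp add: permutes_eq_iff[OF u] sig_eq_iff)
      qed
    qed
    show "w x \<in> {1..Suc d}" if "x \<in> {1..Suc d}" for x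
    proof (cases "x = a")
      case False
      then have "u (sig a x) \<in> {1..Suc d - 1}"
        using permutes_in_interval[OF u] sig_in_interval[OF that a] by simp
      then show ?thesis using siginv_in_interval[OF _ v] w_other[OF False] by simp
    qed (use v in \<open>simp add: w_def\<close>)
    show "w x = x" if "x \<notin> {1..Suc d}" for x
    proof -
      have "sig a x \<notin> {1..d}" using that a by (auto simp: sig_def)
      then have "u (sig a x) = sig a x" by (rule permutes_not_in[OF u])
      with that a v show ?thesis by (auto simp: w_def sig_def siginv_def)
    qed
  qed simp
  moreover have "hat w a = u"
    by (rule ext) (simp add: hat_apply w_def)
  ultimately show ?thesis by (auto simp: w_def)
qed

lemma card_inversions_hat:
  assumes w: "w permutes {1..d}" and a: "a \<in> {1..d}"
  shows "card (inversions d w) = card (inversions (d - 1) (hat w a))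
           + card {x \<in> {1..d}. x < a \<and> w a < w x} + card {x \<in> {1..d}. a < x \<and> w x < w a}"
proof -
  let ?through_a = "{z \<in> inversions d w. fst z = a \<or> snd z = a}"
  let ?left = "{x \<in> {1..d}. x < a \<and> w a < w x}" and ?right = "{x \<in> {1..d}. a < x \<and> w x < w a}"
  let ?f = "\<lambda>(x, y). (sig a x, sig a y)"
  have "?through_a = (\<lambda>x. (x, a)) ` ?left \<union> Pair a ` ?right"
    using a by (auto simp: inversions_def)
  then have through_a: "card ?through_a = card ?left + card ?right"
    by (simp only:) (subst card_Un_disjoint; auto simp: card_image inj_on_def)
  have image: "?f ` (inversions d w - ?through_a) = inversions (d - 1) (hat w a)"
  proof (intro set_eqI iffI)
    fix z assume "z \<in> ?f ` (inversions d w - ?through_a)"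
    then obtain p where p: "p \<in> inversions d w - ?through_a" "z = ?f p" by blast
    obtain x y where "p = (x, y)" by fastforce
    with p have z: "z = (sig a x, sig a y)" and xy: "(x, y) \<in> inversions d w" "x \<noteq> a" "y \<noteq> a"
      by auto
    then have "x \<in> {1..d}" "y \<in> {1..d}" "x < y" "w y < w x"
      by (auto simp: inversions_def)
    moreover have "w x \<noteq> w a" "w y \<noteq> w a" using xy by (simp_all add: permutes_eq_iff[OF w])
    ultimately show "z \<in> inversions (d - 1) (hat w a)"
      using z xy sig_in_interval[OF _ a] by (simp add: inversions_def hat_sig sig_less_iff)
  next
    fix z assume "z \<in> inversions (d - 1) (hat w a)"
    then obtain x y where z: "z = (x, y)" and xy: "x \<in> {1..d - 1}" "y \<in> {1..d - 1}" "x < y"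
      "hat w a y < hat w a x"
      by (auto simp: inversions_def)
    have "w (siginv a x) \<noteq> w a" "w (siginv a y) \<noteq> w a" by (simp_all add: permutes_eq_iff[OF w])
    then have "(siginv a x, siginv a y) \<in> inversions d w"
      using xy siginv_in_interval[OF _ a]
      by (simp add: inversions_def hat_apply sig_less_iff siginv_less_iff)
    then have "(siginv a x, siginv a y) \<in> inversions d w - ?through_a" by simp
    moreover have "z = ?f (siginv a x, siginv a y)" using z by simp
    ultimately show "z \<in> ?f ` (inversions d w - ?through_a)" by blast
  qed
  have "inj_on ?f (inversions d w - ?through_a)"
    by (rule inj_onI) (auto simp: sig_eq_iff)
  from card_image[OF this] image
  have "card (inversions d w - ?through_a) = card (inversions (d - 1) (hat w a))" by simp
  moreover have "card (inversions d w - ?through_a) = card (inversions d w) - card ?through_a"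
    by (rule card_Diff_subset) auto
  moreover have "card ?through_a \<le> card (inversions d w)"
    by (rule card_mono) auto
  ultimately show ?thesis using through_a by linarith
qed

lemma psi_pos_iff:
  "i \<in> {1..n} \<Longrightarrow> j \<in> {1..n'} \<Longrightarrow> 0 < psi n n' b c w i j \<longleftrightarrow> (\<exists>x\<in>Blk b i. w x \<in> Blk c j)"
  by (auto simp: psi_def card_gt_0_iff)

lemma psi_hat:
  assumes w: "w permutes {1..d}" and a: "a \<in> Blk b i" and wa: "w a \<in> Blk c j"
    and i: "i \<in> {1..n}" and j: "j \<in> {1..n'}"
  shows "psi n n' (b(i := b i - 1)) (c(j := c j - 1)) (hat w a)
       = (psi n n' b c w)(i := (psi n n' b c w i)(j := psi n n' b c w i j - 1))"
proof (intro ext)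
  fix i' j'
  let ?b = "b(i := b i - 1)" and ?c = "c(j := c j - 1)"
  let ?A = "w ` Blk b i' \<inter> Blk c j'"
  have "hat w a ` Blk ?b i' \<inter> Blk ?c j' = sig (w a) ` (?A - {w a})"
  proof (intro set_eqI iffI)
    fix z assume "z \<in> hat w a ` Blk ?b i' \<inter> Blk ?c j'"
    then obtain y where "siginv a y \<in> Blk b i'" "z = sig (w a) (w (siginv a y))"
      "w (siginv a y) \<in> Blk c j'"
      using in_Blk_pred_iff[OF a] sig_in_Blk_pred_iff[OF wa] permutes_eq_iff[OF w]
      by (auto simp: hat_apply)
    then show "z \<in> sig (w a) ` (?A - {w a})" by (auto simp: permutes_eq_iff[OF w])
  next
    fix z assume "z \<in> sig (w a) ` (?A - {w a})"
    then obtain x where "x \<in> Blk b i'" "w x \<in> Blk c j'" "x \<noteq> a" "z = sig (w a) (w x)"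
      by auto
    then show "z \<in> hat w a ` Blk ?b i' \<inter> Blk ?c j'"
      using sig_in_Blk_pred_iff[OF a] sig_in_Blk_pred_iff[OF wa] permutes_eq_iff[OF w]
      by (metis IntI hat_sig image_eqI)
  qed
  moreover have "card (sig (w a) ` (?A - {w a})) = card (?A - {w a})"
    by (rule card_image, rule inj_on_subset[OF inj_on_sig]) auto
  moreover have "w a \<in> ?A \<longleftrightarrow> i' = i \<and> j' = j"
    using a wa Blk_unique by (auto simp: permutes_eq_iff[OF w])
  ultimately show "psi n n' ?b ?c (hat w a) i' j'
      = ((psi n n' b c w)(i := (psi n n' b c w i)(j := psi n n' b c w i j - 1))) i' j'"
    using i j by (auto simp: psi_def card_Diff_singleton_if)
qed

section \<open>The longest element of a double coset\<close>

definition blockwise_decreasing :: "nat \<Rightarrow> (nat \<Rightarrow> nat) \<Rightarrow> (nat \<Rightarrow> nat) \<Rightarrow> (nat \<Rightarrow> nat) \<Rightarrow> bool" where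
  "blockwise_decreasing d b c w \<longleftrightarrow> w permutes {1..d} \<and>
     (\<forall>x\<in>{1..d}. \<forall>y\<in>{1..d}. x < y \<longrightarrow>
        (\<exists>i. x \<in> Blk b i \<and> y \<in> Blk b i) \<or> (\<exists>j. w x \<in> Blk c j \<and> w y \<in> Blk c j) \<longrightarrow> w y < w x)"

lemma blockwise_decreasing_permutes: "blockwise_decreasing d b c w \<Longrightarrow> w permutes {1..d}"
  by (simp add: blockwise_decreasing_def)

lemma blockwise_decreasingD:
  "blockwise_decreasing d b c w \<Longrightarrow> x \<in> {1..d} \<Longrightarrow> y \<in> {1..d} \<Longrightarrow> x < y \<Longrightarrow>
    (\<exists>i. x \<in> Blk b i \<and> y \<in> Blk b i) \<or> (\<exists>j. w x \<in> Blk c j \<and> w y \<in> Blk c j) \<Longrightarrow> w y < w x"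
  unfolding blockwise_decreasing_def by blast

lemma blockwise_decreasing_hat:
  assumes g: "blockwise_decreasing d b c w" and a: "a \<in> Blk b i" "a \<in> {1..d}" and wa: "w a \<in> Blk c j"
  shows "blockwise_decreasing (d - 1) (b(i := b i - 1)) (c(j := c j - 1)) (hat w a)"
  unfolding blockwise_decreasing_def
proof (intro conjI ballI impI)
  have w: "w permutes {1..d}" using g by (rule blockwise_decreasing_permutes)
  then show "hat w a permutes {1..d - 1}" using hat_permutes a(2) by blast
  fix x y assume xy: "x \<in> {1..d - 1}" "y \<in> {1..d - 1}" "x < y"
    and same: "(\<exists>i'. x \<in> Blk (b(i := b i - 1)) i' \<and> y \<in> Blk (b(i := b i - 1)) i') \<or>
      (\<exists>j'. hat w a x \<in> Blk (c(j := c j - 1)) j' \<and> hat w a y \<in> Blk (c(j := c j - 1)) j')"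
  have ne: "w (siginv a x) \<noteq> w a" "w (siginv a y) \<noteq> w a" by (simp_all add: permutes_eq_iff[OF w])
  from same have "(\<exists>i'. siginv a x \<in> Blk b i' \<and> siginv a y \<in> Blk b i') \<or>
      (\<exists>j'. w (siginv a x) \<in> Blk c j' \<and> w (siginv a y) \<in> Blk c j')"
    by (simp only: in_Blk_pred_iff[OF a(1)] sig_in_Blk_pred_iff[OF wa ne(1)]
        sig_in_Blk_pred_iff[OF wa ne(2)] hat_apply)
  with ne have "w (siginv a y) < w (siginv a x)"
    using blockwise_decreasingD[OF g siginv_in_interval[OF xy(1) a(2)] siginv_in_interval[OF xy(2) a(2)]]
      xy(3) by (simp add: siginv_less_iff)
  with ne show "hat w a y < hat w a x" by (simp add: hat_apply sig_less_iff)
qed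

lemma exists_ascent:
  fixes f :: "nat \<Rightarrow> nat"
  assumes "x \<le> y" and "f x < f y"
  shows "\<exists>p. x \<le> p \<and> p < y \<and> f p < f (Suc p)"
proof (rule ccontr)
  assume no_ascent: "\<not> ?thesis"
  have "f k \<le> f x" if "x \<le> k" "k \<le> y" for k
    using that
  proof (induction k)
    case (Suc k)
    show ?case
    proof (cases "x = Suc k")
      case False
      then have "x \<le> k" "k < y" using Suc.prems by auto
      then have "f (Suc k) \<le> f k" "f k \<le> f x" using no_ascent Suc.IH leI by auto
      then show ?thesis by simp
    qed simp
  qed simp
  with assms show False by fastforce
qed

lemma psi_comp_transpose:
  assumes "p \<in> Blk b i" "Suc p \<in> Blk b i"
  shows "psi n n' b c (w \<circ> transpose p (Suc p)) = psi n n' b c w"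
proof -
  have "transpose p (Suc p) ` Blk b i' = Blk b i'" for i'
    using assms Blk_unique by (metis transpose_image_eq)
  then have "(w \<circ> transpose p (Suc p)) ` Blk b i' = w ` Blk b i'" for i'
    by (metis image_comp)
  then show ?thesis unfolding psi_def by (simp only:)
qed

lemma psi_transpose_comp:
  assumes "t \<in> Blk c j" "Suc t \<in> Blk c j"
  shows "psi n n' b c (transpose t (Suc t) \<circ> w) = psi n n' b c w"
proof -
  have "transpose t (Suc t) ` Blk c j' = Blk c j'" for j'
    using assms Blk_unique by (metis transpose_image_eq)
  then have "(transpose t (Suc t) \<circ> w) ` Blk b i' \<inter> Blk c j'
      = transpose t (Suc t) ` (w ` Blk b i' \<inter> Blk c j')" for i' j'
    by (simp add: image_Int[OF inj_transpose] image_comp)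
  then have "card ((transpose t (Suc t) \<circ> w) ` Blk b i' \<inter> Blk c j') = card (w ` Blk b i' \<inter> Blk c j')"
    for i' j'
    by (simp add: card_image)
  then show ?thesis by (simp only: psi_def)
qed

lemma dcoset_longer_of_row_ascent:
  assumes W: "W \<in> dcoset d n n' b c m" and xy: "x \<in> Blk b i" "y \<in> Blk b i" "x \<in> {1..d}" "y \<in> {1..d}"
    and ascent: "x < y" "W x < W y"
  shows "\<exists>w\<in>dcoset d n n' b c m. card (inversions d W) < card (inversions d w)"
proof -
  have Wp: "W permutes {1..d}" using W by (simp add: dcoset_def)
  obtain p where p: "x \<le> p" "p < y" "W p < W (Suc p)" using exists_ascent[of x y W] ascent by auto
  have "p \<in> Blk b i" "Suc p \<in> Blk b i" using Blk_convex[OF xy(1,2)] p by auto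
  moreover have pD: "p \<in> {1..d}" "Suc p \<in> {1..d}" using p xy by auto
  ultimately have "W \<circ> transpose p (Suc p) \<in> dcoset d n n' b c m"
    using W permutes_compose[OF permutes_swap_id[OF pD] Wp] psi_comp_transpose
    by (simp add: dcoset_def)
  then show ?thesis using card_inversions_transpose_right[OF Wp pD p(3)] by force
qed

lemma dcoset_longer_of_col_ascent:
  assumes W: "W \<in> dcoset d n n' b c m" and xy: "W x \<in> Blk c j" "W y \<in> Blk c j" "x \<in> {1..d}" "y \<in> {1..d}"
    and ascent: "x < y" "W x < W y"
  shows "\<exists>w\<in>dcoset d n n' b c m. card (inversions d W) < card (inversions d w)"
proof -
  have Wp: "W permutes {1..d}" using W by (simp add: dcoset_def)
  let ?u = "inv W"
  have "?u (W x) < ?u (W y)" using ascent by (simp add: permutes_inverses(2)[OF Wp])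
  then obtain t where t: "W x \<le> t" "t < W y" "?u t < ?u (Suc t)"
    using exists_ascent[of "W x" "W y" ?u] ascent by auto
  have "t \<in> Blk c j" "Suc t \<in> Blk c j" using Blk_convex[OF xy(1,2)] t by auto
  moreover have tD: "t \<in> {1..d}" "Suc t \<in> {1..d}"
    using t permutes_in_interval[OF Wp xy(3)] permutes_in_interval[OF Wp xy(4)] by auto
  ultimately have "transpose t (Suc t) \<circ> W \<in> dcoset d n n' b c m"
    using W permutes_compose[OF Wp permutes_swap_id[OF tD]] psi_transpose_comp
    by (simp add: dcoset_def)
  moreover
  have PQ: "?u t \<in> {1..d}" "?u (Suc t) \<in> {1..d}" "{W (?u t), W (?u (Suc t))} = {t, Suc t}"
    using permutes_in_interval[OF permutes_inv[OF Wp]] tD by (simp_all add: permutes_inverses(1)[OF Wp])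
  have "(?u t, ?u (Suc t)) \<notin> inversions d W"
    by (simp add: inversions_def permutes_inverses(1)[OF Wp])
  then have "card (inversions d (transpose t (Suc t) \<circ> W)) = card (inversions d W) + 1"
    using card_inversions_transpose_left[OF permutes_inj_on[OF Wp] PQ(1,2) t(3) PQ(3)] by simp
  ultimately show ?thesis by force
qed

lemma max_inversions_imp_blockwise_decreasing:
  assumes W: "W \<in> dcoset d n n' b c m"
    and max: "\<forall>w\<in>dcoset d n n' b c m. card (inversions d w) \<le> card (inversions d W)"
  shows "blockwise_decreasing d b c W"
proof -
  have Wp: "W permutes {1..d}" using W by (simp add: dcoset_def)
  have "W y < W x"
    if "x \<in> {1..d}" "y \<in> {1..d}" "x < y"
      "(\<exists>i. x \<in> Blk b i \<and> y \<in> Blk b i) \<or> (\<exists>j. W x \<in> Blk c j \<and> W y \<in> Blk c j)" for x y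
  proof (rule ccontr)
    assume "\<not> W y < W x"
    moreover have "W x \<noteq> W y" using that by (simp add: permutes_eq_iff[OF Wp])
    ultimately have "W x < W y" by simp
    then show False
      using that dcoset_longer_of_row_ascent[OF W] dcoset_longer_of_col_ascent[OF W] max
      by (meson leD)
  qed
  then show ?thesis unfolding blockwise_decreasing_def using Wp by blast
qed

lemma blockwise_decreasing_last_le:
  assumes g: "blockwise_decreasing (Suc d) b c w" and g': "blockwise_decreasing (Suc d) b c w'"
    and same: "psi n n' b c w = psi n n' b c w'" and b: "psum b n = Suc d" and c: "psum c n' = Suc d"
  shows "w (Suc d) \<le> w' (Suc d)"
proof -
  let ?a = "Suc d"
  have w: "w permutes {1..Suc d}" and w': "w' permutes {1..Suc d}"
    using g g' blockwise_decreasing_permutes by auto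
  have a: "?a \<in> {1..Suc d}" by simp
  obtain i where i: "i \<in> {1..n}" "?a \<in> Blk b i" using Blk_cover[of ?a b n] b by auto
  obtain j where j: "j \<in> {1..n'}" "w ?a \<in> Blk c j"
    using Blk_cover[of "w ?a" c n'] permutes_in_interval[OF w a] c by auto
  obtain j' where j': "j' \<in> {1..n'}" "w' ?a \<in> Blk c j'"
    using Blk_cover[of "w' ?a" c n'] permutes_in_interval[OF w' a] c by auto
  obtain y where y: "y \<in> Blk b i" "w y \<in> Blk c j'"
    using psi_pos_iff[OF i(1) j'(1), of b c w] psi_pos_iff[OF i(1) j'(1), of b c w'] i(2) j'(2) same
    by auto
  have yD: "y \<in> {1..Suc d}" using y(1) Blk_subset[of i n b] i(1) b by auto
  have "\<not> j' < j"
  proof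
    assume "j' < j"
    then have "w y < w ?a" using Blk_less[OF y(2) j(2)] by simp
    moreover from this have "y < ?a" using yD by (cases "y = ?a") auto
    then have "w ?a < w y" using blockwise_decreasingD[OF g yD a] y(1) i(2) by blast
    ultimately show False by simp
  qed
  show ?thesis
  proof (cases "j = j'")
    case True
    define z where "z = inv w (w' ?a)"
    have z: "z \<in> {1..Suc d}" "w z = w' ?a"
      unfolding z_def using permutes_in_interval[OF permutes_inv[OF w] permutes_in_interval[OF w' a]]
      by (simp_all add: permutes_inverses(1)[OF w])
    show ?thesis
    proof (cases "z = ?a")
      case False
      then have "z < ?a" using z(1) by simp
      then have "w ?a < w z" using blockwise_decreasingD[OF g z(1) a] z(2) j(2) j'(2) True by auto
      then show ?thesis using z(2) by simp
    qed (use z in simp)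
  next
    case False
    with \<open>\<not> j' < j\<close> have "j < j'" by simp
    then show ?thesis using Blk_less[OF j(2) j'(2)] by simp
  qed
qed

lemma blockwise_decreasing_unique:
  "blockwise_decreasing d b c w \<Longrightarrow> blockwise_decreasing d b c w' \<Longrightarrow>
    psi n n' b c w = psi n n' b c w' \<Longrightarrow> psum b n = d \<Longrightarrow> psum c n' = d \<Longrightarrow> w = w'"
proof (induction d arbitrary: b c w w')
  case 0
  then have "w permutes {}" "w' permutes {}" using blockwise_decreasing_permutes by fastforce+
  then show ?case by simp
next
  case (Suc d)
  let ?a = "Suc d"
  have w: "w permutes {1..Suc d}" and w': "w' permutes {1..Suc d}"
    using Suc.prems blockwise_decreasing_permutes by auto
  have a: "?a \<in> {1..Suc d}" by simp
  have wa: "w ?a = w' ?a"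
    using blockwise_decreasing_last_le[OF Suc.prems(1-5)]
      blockwise_decreasing_last_le[OF Suc.prems(2,1) Suc.prems(3)[symmetric] Suc.prems(4,5)]
    by (rule antisym)
  obtain i where i: "i \<in> {1..n}" "?a \<in> Blk b i" using Blk_cover[of ?a b n] Suc.prems(4) by auto
  obtain j where j: "j \<in> {1..n'}" "w ?a \<in> Blk c j"
    using Blk_cover[of "w ?a" c n'] permutes_in_interval[OF w a] Suc.prems(5) by auto
  let ?b = "b(i := b i - 1)" and ?c = "c(j := c j - 1)"
  have sums: "psum ?b n = d" "psum ?c n'= d"
    using psum_fun_upd_pred[of b i n] psum_fun_upd_pred[of c j n'] mem_BlkD[OF i(2)] mem_BlkD[OF j(2)]
      i(1) j(1) Suc.prems(4,5) by auto
  have "psi n n' ?b ?c (hat w ?a) = psi n n' ?b ?c (hat w' ?a)"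
    using psi_hat[OF w i(2) j(2) i(1) j(1)] psi_hat[OF w' i(2) _ i(1) j(1)] j(2) wa Suc.prems(3)
    by simp
  moreover have "blockwise_decreasing d ?b ?c (hat w ?a)" "blockwise_decreasing d ?b ?c (hat w' ?a)"
    using blockwise_decreasing_hat[OF Suc.prems(1) i(2) a j(2)]
      blockwise_decreasing_hat[OF Suc.prems(2) i(2) a] j(2) wa by simp_all
  ultimately have hat_eq: "hat w ?a = hat w' ?a"
    using Suc.IH sums by blast
  show ?case
  proof
    fix x
    show "w x = w' x"
      using wa eq_siginv_hat[OF w, of x ?a] eq_siginv_hat[OF w', of x ?a] hat_eq by (cases "x = ?a") auto
  qed
qed

lemma matset_pred:
  assumes m: "m \<in> matset n n' b c" and i: "i \<in> {1..n}" and j: "j \<in> {1..n'}" and mij: "1 \<le> m i j"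
  shows "m(i := (m i)(j := m i j - 1)) \<in> matset n n' (b(i := b i - 1)) (c(j := c j - 1))"
proof -
  let ?m = "m(i := (m i)(j := m i j - 1))"
  have "(\<Sum>j'\<in>{1..n'}. ?m i' j') = (b(i := b i - 1)) i'" if "i' \<in> {1..n}" for i'
    using m that sum_fun_upd_pred[of "{1..n'}" "m i" j] mij j by (auto simp: matset_def)
  moreover have "(\<Sum>i'\<in>{1..n}. ?m i' j') = (c(j := c j - 1)) j'" if "j' \<in> {1..n'}" for j'
  proof (cases "j' = j")
    case True
    then have column: "(\<lambda>i'. ?m i' j') = (\<lambda>i'. m i' j)(i := m i j - 1)" by auto
    have "(\<Sum>i'\<in>{1..n}. ?m i' j') = (\<Sum>i'\<in>{1..n}. m i' j) - 1"
      unfolding column using sum_fun_upd_pred[of "{1..n}" "\<lambda>i'. m i' j" i] mij i by simp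
    with True m that show ?thesis by (simp add: matset_def)
  next
    case False
    then have column: "(\<lambda>i'. ?m i' j') = (\<lambda>i'. m i' j')" by auto
    from False m that show ?thesis unfolding column by (simp add: matset_def)
  qed
  moreover have "?m i' j' = 0" if "\<not> (i' \<in> {1..n} \<and> j' \<in> {1..n'})" for i' j'
    using m that i j by (auto simp: matset_def)
  ultimately show ?thesis unfolding matset_def by blast
qed

lemma dcoset_nonempty:
  "m \<in> matset n n' b c \<Longrightarrow> psum b n = d \<Longrightarrow> psum c n' = d \<Longrightarrow> dcoset d n n' b c m \<noteq> {}"
proof (induction d arbitrary: b c m)
  case 0
  then have "Blk b i = {}" if "i \<in> {1..n}" for i
    using that card_Blk[of i b] by fastforce
  moreover have "m i j = 0" for i j
    using 0 by (cases "i \<in> {1..n} \<and> j \<in> {1..n'}") (auto simp: matset_def)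
  ultimately have "psi n n' b c id = m" by (intro ext) (simp add: psi_def)
  then show ?case by (auto simp: dcoset_def permutes_id)
next
  case (Suc d)
  have "\<exists>i\<in>{1..n}. b i \<noteq> 0" using Suc.prems(2) sum.neutral[of "{1..n}" b] by (metis nat.distinct(1))
  then obtain i where i: "i \<in> {1..n}" "1 \<le> b i" by auto
  have "(\<Sum>j'\<in>{1..n'}. m i j') = b i" using Suc.prems(1) i(1) by (simp add: matset_def)
  then have "\<exists>j\<in>{1..n'}. m i j \<noteq> 0" using i(2) sum.neutral[of "{1..n'}" "m i"] by fastforce
  then obtain j where j: "j \<in> {1..n'}" "1 \<le> m i j" by auto
  have "m i j \<le> c j" using Suc.prems(1) i(1) j(1) member_le_sum[of i "{1..n}" "\<lambda>i'. m i' j"]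
    by (simp add: matset_def)
  then have cj: "1 \<le> c j" using j(2) by simp
  let ?b = "b(i := b i - 1)" and ?c = "c(j := c j - 1)" and ?m = "m(i := (m i)(j := m i j - 1))"
  have "psum ?b n = d" "psum ?c n' = d"
    using psum_fun_upd_pred[of b i n] psum_fun_upd_pred[of c j n'] i j cj Suc.prems(2,3) by auto
  then have "dcoset d n n' ?b ?c ?m \<noteq> {}"
    by (rule Suc.IH[OF matset_pred[OF Suc.prems(1) i(1) j]])
  then obtain u where u: "u permutes {1..d}" "psi n n' ?b ?c u = ?m"
    unfolding dcoset_def by blast
  have a: "psum b i \<in> Blk b i" and v: "psum c j \<in> Blk c j"
    using psum_in_Blk i j cj by auto
  have "psum b i \<in> {1..Suc d}" "psum c j \<in> {1..Suc d}"
    using a v i(1) j(1) Suc.prems(2,3) Blk_subset[of i n b] Blk_subset[of j n' c] by auto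
  then obtain w where w: "w permutes {1..Suc d}" "w (psum b i) = psum c j" "hat w (psum b i) = u"
    using exists_permutes_hat_eq[OF u(1)] by blast
  have pos: "0 < psi n n' b c w i j" using psi_pos_iff[OF i(1) j(1)] a v w(2) by metis
  have pred: "(psi n n' b c w)(i := (psi n n' b c w i)(j := psi n n' b c w i j - 1)) = ?m"
    using psi_hat[OF w(1) a _ i(1) j(1)] w(2,3) v u(2) by simp
  have "psi n n' b c w i' j' = m i' j'" for i' j'
    using fun_cong[OF fun_cong[OF pred, of i'], of j'] pos j(2) by (auto split: if_splits)
  then have "psi n n' b c w = m" by (intro ext)
  with w(1) show ?case by (auto simp: dcoset_def)
qed

lemma finite_dcoset: "finite (dcoset d n n' b c m)"
  by (rule finite_subset[of _ "{p. p permutes {1..d}}"]) (auto simp: dcoset_def finite_permutations)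

lemma exists_max_inversions_in_dcoset:
  assumes "dcoset d n n' b c m \<noteq> {}"
  shows "\<exists>W\<in>dcoset d n n' b c m. \<forall>w\<in>dcoset d n n' b c m. card (inversions d w) \<le> card (inversions d W)"
proof -
  let ?len = "\<lambda>w. card (inversions d w)"
  have "Max (?len ` dcoset d n n' b c m) \<in> ?len ` dcoset d n n' b c m"
    using finite_dcoset assms by (intro Max_in) auto
  then obtain W where "W \<in> dcoset d n n' b c m" "?len W = Max (?len ` dcoset d n n' b c m)"
    by auto
  then show ?thesis using finite_dcoset by (metis Max_ge finite_imageI image_eqI)
qed

lemma wlong_eqI:
  assumes w: "w \<in> dcoset d n n' b c m" and g: "blockwise_decreasing d b c w"
    and b: "psum b n = d" and c: "psum c n' = d"
  shows "wlong d n n' b c m = w"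
proof -
  let ?D = "dcoset d n n' b c m"
  have eq_w: "w' = w" if "w' \<in> ?D" "\<forall>w''\<in>?D. card (inversions d w'') \<le> card (inversions d w')" for w'
    using blockwise_decreasing_unique[OF max_inversions_imp_blockwise_decreasing[OF that] g _ b c] that(1) w
    by (simp add: dcoset_def)
  obtain W where W: "W \<in> ?D" "\<forall>w'\<in>?D. card (inversions d w') \<le> card (inversions d W)"
    using exists_max_inversions_in_dcoset w by blast
  have clen: "clen d w' = card (inversions d w')" if "w' \<in> ?D" for w'
    using that clen_eq_card_inversions by (simp add: dcoset_def)
  show ?thesis
    unfolding wlong_def
  proof (rule the_equality)
    show "w \<in> ?D \<and> (\<forall>w'\<in>?D. clen d w' \<le> clen d w)" using W eq_w[OF W] w clen by auto
    show "w' = w" if "w' \<in> ?D \<and> (\<forall>w''\<in>?D. clen d w'' \<le> clen d w')" for w'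
      using that eq_w clen by auto
  qed
qed

lemma wlong_blockwise_decreasing:
  assumes m: "m \<in> matset n n' b c" and b: "psum b n = d" and c: "psum c n' = d"
  shows "wlong d n n' b c m \<in> dcoset d n n' b c m \<and> blockwise_decreasing d b c (wlong d n n' b c m)"
proof -
  obtain W where "W \<in> dcoset d n n' b c m"
    "\<forall>w\<in>dcoset d n n' b c m. card (inversions d w) \<le> card (inversions d W)"
    using exists_max_inversions_in_dcoset dcoset_nonempty[OF m b c] by blast
  moreover from this have "blockwise_decreasing d b c W" by (rule max_inversions_imp_blockwise_decreasing)
  ultimately show ?thesis using wlong_eqI b c by simp
qed

section \<open>Inversions through a point\<close>

lemma blockwise_decreasing_inversion_iff:
  assumes g: "blockwise_decreasing d b c w" and b: "psum b n = d"
    and x: "x \<in> Blk b i'" "w x \<in> Blk c j'" "i' \<le> n" and a: "a \<in> Blk b i" "w a \<in> Blk c j" "i \<le> n"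
  shows "x < a \<and> w a < w x \<longleftrightarrow> (i' < i \<and> j \<le> j') \<or> (i' = i \<and> x < a)"
proof
  assume "x < a \<and> w a < w x"
  then have "\<not> i < i'" "\<not> j' < j" using Blk_less[OF a(1) x(1)] Blk_less[OF x(2) a(2)] by auto
  with \<open>x < a \<and> w a < w x\<close> show "(i' < i \<and> j \<le> j') \<or> (i' = i \<and> x < a)" by auto
next
  have xa: "x \<in> {1..d}" "a \<in> {1..d}"
    using Blk_subset[of i' n b, OF x(3)] Blk_subset[of i n b, OF a(3)] x(1) a(1) b by auto
  assume "(i' < i \<and> j \<le> j') \<or> (i' = i \<and> x < a)"
  then show "x < a \<and> w a < w x"
  proof
    assume "i' < i \<and> j \<le> j'"
    moreover from this have "x < a" using Blk_less[OF x(1) a(1)] by simp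
    ultimately show ?thesis
      using blockwise_decreasingD[OF g xa] Blk_less[OF a(2) x(2)] x(2) a(2) by (cases "j = j'") auto
  qed (use blockwise_decreasingD[OF g xa] x(1) a(1) in auto)
qed

lemma card_UN_blocks:
  assumes w: "w permutes {1..d}" and I: "I \<subseteq> {1..n}" and J: "J \<subseteq> {1..n'}"
  shows "card (\<Union>i'\<in>I. \<Union>j'\<in>J. {x \<in> Blk b i'. w x \<in> Blk c j'})
    = (\<Sum>i'\<in>I. \<Sum>j'\<in>J. psi n n' b c w i' j')"
proof -
  have fin: "finite I" "finite J" using I J finite_subset by auto
  have "card {x \<in> Blk b i'. w x \<in> Blk c j'} = psi n n' b c w i' j'" if "i' \<in> I" "j' \<in> J" for i' j'
  proof -
    have "w ` Blk b i' \<inter> Blk c j' = w ` {x \<in> Blk b i'. w x \<in> Blk c j'}" by auto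
    then show ?thesis
      using that I J card_image[OF permutes_inj_on[OF w]] by (auto simp: psi_def)
  qed
  moreover have "card (\<Union>j'\<in>J. {x \<in> Blk b i'. w x \<in> Blk c j'})
      = (\<Sum>j'\<in>J. card {x \<in> Blk b i'. w x \<in> Blk c j'})" for i'
    using fin by (intro card_UN_disjoint) (auto dest: Blk_unique)
  moreover have "card (\<Union>i'\<in>I. \<Union>j'\<in>J. {x \<in> Blk b i'. w x \<in> Blk c j'})
      = (\<Sum>i'\<in>I. card (\<Union>j'\<in>J. {x \<in> Blk b i'. w x \<in> Blk c j'}))"
    using fin by (intro card_UN_disjoint) (auto dest: Blk_unique)
  ultimately show ?thesis by simp
qed

lemma card_left_inversions_at:
  assumes g: "blockwise_decreasing d b c w" and b: "psum b n = d" and c: "psum c n' = d"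
    and i: "i \<in> {1..n}" and j: "j \<in> {1..n'}" and a: "a \<in> Blk b i" and wa: "w a \<in> Blk c j"
  shows "card {x \<in> {1..d}. x < a \<and> w a < w x}
    = msLG n' (psi n n' b c w) (i - 1) j + card {x \<in> Blk b i. x < a}"
proof -
  have w: "w permutes {1..d}" using g by (rule blockwise_decreasing_permutes)
  let ?U = "\<Union>i'\<in>{1..i - 1}. \<Union>j'\<in>{j..n'}. {x \<in> Blk b i'. w x \<in> Blk c j'}"
  have iff: "x < a \<and> w a < w x \<longleftrightarrow> (i' < i \<and> j \<le> j') \<or> (i' = i \<and> x < a)"
    if "x \<in> Blk b i'" "w x \<in> Blk c j'" "i' \<le> n" for x i' j'
    using blockwise_decreasing_inversion_iff[OF g b that] a wa i by auto
  have blocks: "\<exists>i'\<in>{1..n}. \<exists>j'\<in>{1..n'}. x \<in> Blk b i' \<and> w x \<in> Blk c j'" if "x \<in> {1..d}" for x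
    using Blk_cover[of x b n] Blk_cover[of "w x" c n'] permutes_in_interval[OF w that] that b c by auto
  have "{x \<in> {1..d}. x < a \<and> w a < w x} = ?U \<union> {x \<in> Blk b i. x < a}"
  proof (intro set_eqI iffI)
    fix x assume x: "x \<in> {x \<in> {1..d}. x < a \<and> w a < w x}"
    with blocks obtain i' j' where "i' \<in> {1..n}" "j' \<in> {1..n'}" "x \<in> Blk b i'" "w x \<in> Blk c j'" by blast
    with x iff show "x \<in> ?U \<union> {x \<in> Blk b i. x < a}" by auto
  next
    fix x assume x: "x \<in> ?U \<union> {x \<in> Blk b i. x < a}"
    then have "x \<in> {1..d}"
    proof
      assume "x \<in> ?U"
      then obtain i' where "i' \<in> {1..i - 1}" "x \<in> Blk b i'" by blast
      moreover from this have "i' \<le> n" using i by auto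
      ultimately show ?thesis using Blk_subset[of i' n b] b by blast
    qed (use Blk_subset[of i n b] i b in auto)
    with blocks obtain i' j' where "i' \<in> {1..n}" "j' \<in> {1..n'}" "x \<in> Blk b i'" "w x \<in> Blk c j'" by blast
    with x iff \<open>x \<in> {1..d}\<close> show "x \<in> {x \<in> {1..d}. x < a \<and> w a < w x}"
      by (auto dest: Blk_unique)
  qed
  moreover have "?U \<inter> {x \<in> Blk b i. x < a} = {}" using i by (auto dest: Blk_unique)
  moreover have "card ?U = msLG n' (psi n n' b c w) (i - 1) j"
    unfolding msLG_def using i j by (intro card_UN_blocks[OF w]) auto
  ultimately show ?thesis by (simp add: card_Un_disjoint)
qed

lemma card_right_inversions_at:
  assumes g: "blockwise_decreasing d b c w" and b: "psum b n = d" and c: "psum c n' = d"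
    and i: "i \<in> {1..n}" and j: "j \<in> {1..n'}" and a: "a \<in> Blk b i" and wa: "w a \<in> Blk c j"
  shows "card {x \<in> {1..d}. a < x \<and> w x < w a}
    = msGL n (psi n n' b c w) (i + 1) j + card {x \<in> Blk b i. a < x}"
proof -
  have w: "w permutes {1..d}" using g by (rule blockwise_decreasing_permutes)
  let ?U = "\<Union>i'\<in>{i + 1..n}. \<Union>j'\<in>{1..j}. {x \<in> Blk b i'. w x \<in> Blk c j'}"
  have iff: "a < x \<and> w x < w a \<longleftrightarrow> (i < i' \<and> j' \<le> j) \<or> (i' = i \<and> a < x)"
    if "x \<in> Blk b i'" "w x \<in> Blk c j'" "i' \<le> n" for x i' j'
    using blockwise_decreasing_inversion_iff[OF g b a wa _ that] i by auto
  have blocks: "\<exists>i'\<in>{1..n}. \<exists>j'\<in>{1..n'}. x \<in> Blk b i' \<and> w x \<in> Blk c j'" if "x \<in> {1..d}" for x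
    using Blk_cover[of x b n] Blk_cover[of "w x" c n'] permutes_in_interval[OF w that] that b c by auto
  have "{x \<in> {1..d}. a < x \<and> w x < w a} = ?U \<union> {x \<in> Blk b i. a < x}"
  proof (intro set_eqI iffI)
    fix x assume x: "x \<in> {x \<in> {1..d}. a < x \<and> w x < w a}"
    with blocks obtain i' j' where "i' \<in> {1..n}" "j' \<in> {1..n'}" "x \<in> Blk b i'" "w x \<in> Blk c j'" by blast
    with x iff show "x \<in> ?U \<union> {x \<in> Blk b i. a < x}" by auto
  next
    fix x assume x: "x \<in> ?U \<union> {x \<in> Blk b i. a < x}"
    then have "x \<in> {1..d}"
    proof
      assume "x \<in> ?U"
      then obtain i' where "i' \<in> {i + 1..n}" "x \<in> Blk b i'" by blast
      moreover from this have "i' \<le> n" by simp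
      ultimately show ?thesis using Blk_subset[of i' n b] b by blast
    qed (use Blk_subset[of i n b] i b in auto)
    with blocks obtain i' j' where "i' \<in> {1..n}" "j' \<in> {1..n'}" "x \<in> Blk b i'" "w x \<in> Blk c j'" by blast
    with x iff \<open>x \<in> {1..d}\<close> show "x \<in> {x \<in> {1..d}. a < x \<and> w x < w a}"
      by (auto dest: Blk_unique)
  qed
  moreover have "?U \<inter> {x \<in> Blk b i. a < x} = {}" by (auto dest: Blk_unique)
  moreover have "card ?U = msGL n (psi n n' b c w) (i + 1) j"
    unfolding msGL_def using i j by (intro card_UN_blocks[OF w]) auto
  ultimately show ?thesis by (simp add: card_Un_disjoint)
qed

lemma card_Blk_less_plus_greater:
  assumes a: "a \<in> Blk b i"
  shows "card {x \<in> Blk b i. x < a} + card {x \<in> Blk b i. a < x} = b i - 1"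
proof -
  have "Blk b i - {a} = {x \<in> Blk b i. x < a} \<union> {x \<in> Blk b i. a < x}" by auto
  then have "card (Blk b i - {a}) = card {x \<in> Blk b i. x < a} + card {x \<in> Blk b i. a < x}"
    by (simp add: card_Un_disjoint disjoint_iff)
  with a card_Blk mem_BlkD[OF a] show ?thesis by simp
qed

lemma card_inversions_blockwise_decreasing_hat:
  assumes g: "blockwise_decreasing d b c w" and b: "psum b n = d" and c: "psum c n' = d"
    and i: "i \<in> {1..n}" and j: "j \<in> {1..n'}" and a: "a \<in> Blk b i" and wa: "w a \<in> Blk c j"
  shows "card (inversions d w) = card (inversions (d - 1) (hat w a))
    + msLG n' (psi n n' b c w) (i - 1) j + msGL n (psi n n' b c w) (i + 1) j + (b i - 1)"
proof -
  have "a \<in> {1..d}" using Blk_subset[of i n b] i a b by auto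
  then show ?thesis
    using card_inversions_hat[OF blockwise_decreasing_permutes[OF g]]
      card_left_inversions_at[OF assms] card_right_inversions_at[OF assms]
      card_Blk_less_plus_greater[OF a] by simp
qed

lemma sum_overlapping_split:
  fixes f :: "nat \<Rightarrow> 'a::comm_monoid_add"
  assumes "1 \<le> j" "j \<le> N"
  shows "(\<Sum>k\<in>{j..N}. f k) + (\<Sum>k\<in>{1..j}. f k) = (\<Sum>k\<in>{1..N}. f k) + f j"
proof -
  have "{1..N} = {1..j} \<union> {Suc j..N}" "{1..j} \<inter> {Suc j..N} = {}" using assms by auto
  then have "(\<Sum>k\<in>{1..N}. f k) = (\<Sum>k\<in>{1..j}. f k) + (\<Sum>k\<in>{Suc j..N}. f k)"
    by (simp add: sum.union_disjoint)
  then show ?thesis using sum.atLeast_Suc_atMost[OF assms(2), of f] by (simp add: ac_simps)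
qed

lemma msLG_msGL_row:
  assumes m: "m \<in> matset n n' b c" and i: "i \<in> {1..n}" and j: "j \<in> {1..n'}"
  shows "msLG n' m i j + msGL n m i j = msLG n' m (i - 1) j + msGL n m (i + 1) j + b i + m i j"
proof -
  have "msLG n' m i j = msLG n' m (i - 1) j + (\<Sum>j'\<in>{j..n'}. m i j')"
    unfolding msLG_def using i by (cases i) auto
  moreover have "msGL n m i j = (\<Sum>j'\<in>{1..j}. m i j') + msGL n m (i + 1) j"
    unfolding msGL_def using sum.atLeast_Suc_atMost[of i n] i by simp
  moreover have "(\<Sum>j'\<in>{j..n'}. m i j') + (\<Sum>j'\<in>{1..j}. m i j') = b i + m i j"
    using sum_overlapping_split[of j n' "m i"] m i j by (simp add: matset_def)
  ultimately show ?thesis by simp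
qed

lemma msLG_msGL_col:
  assumes m: "m \<in> matset n n' b c" and i: "i \<in> {1..n}" and j: "j \<in> {1..n'}"
  shows "msLG n' m i j + msGL n m i j = msLG n' m i (j + 1) + msGL n m i (j - 1) + c j + m i j"
proof -
  have "(\<Sum>j'\<in>{j..n'}. m i' j') = m i' j + (\<Sum>j'\<in>{j + 1..n'}. m i' j')" for i'
    using sum.atLeast_Suc_atMost[of j n' "m i'"] j by simp
  then have "msLG n' m i j = (\<Sum>i'\<in>{1..i}. m i' j) + msLG n' m i (j + 1)"
    unfolding msLG_def by (simp add: sum.distrib)
  moreover have "msGL n m i j = msGL n m i (j - 1) + (\<Sum>i'\<in>{i..n}. m i' j)"
    unfolding msGL_def using j by (cases j) (auto simp: sum.distrib)
  moreover have "(\<Sum>i'\<in>{i..n}. m i' j) + (\<Sum>i'\<in>{1..i}. m i' j) = c j + m i j"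
    using sum_overlapping_split[of i n "\<lambda>i'. m i' j"] m i j by (simp add: matset_def)
  ultimately show ?thesis by simp
qed

context
  fixes d n n' i j a :: nat and b c :: "nat \<Rightarrow> nat" and m :: "nat \<Rightarrow> nat \<Rightarrow> nat"
  assumes b: "psum b n = d" and c: "psum c n' = d" and m: "m \<in> matset n n' b c"
    and i: "i \<in> {1..n}" and j: "j \<in> {1..n'}"
    and a: "a \<in> Blk b i" and wa: "wlong d n n' b c m a \<in> Blk c j"
begin

lemma hat_wlong:
  "hat (wlong d n n' b c m) a = wlong (d - 1) n n' (b(i := b i - 1)) (c(j := c j - 1)) (m(i := (m i)(j := m i j - 1)))"
proof -
  have W: "wlong d n n' b c m \<in> dcoset d n n' b c m" "blockwise_decreasing d b c (wlong d n n' b c m)"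
    using wlong_blockwise_decreasing[OF m b c] by auto
  have aD: "a \<in> {1..d}" using Blk_subset[of i n b] i a b by auto
  have "hat (wlong d n n' b c m) a
      \<in> dcoset (d - 1) n n' (b(i := b i - 1)) (c(j := c j - 1)) (m(i := (m i)(j := m i j - 1)))"
    using hat_permutes[OF blockwise_decreasing_permutes[OF W(2)] aD]
      psi_hat[OF blockwise_decreasing_permutes[OF W(2)] a wa i j] W(1)
    by (simp add: dcoset_def)
  moreover have "psum (b(i := b i - 1)) n = d - 1" "psum (c(j := c j - 1)) n' = d - 1"
    using psum_fun_upd_pred[of b i n] psum_fun_upd_pred[of c j n'] mem_BlkD[OF a] mem_BlkD[OF wa]
      i j b c by auto
  ultimately show ?thesis
    using wlong_eqI blockwise_decreasing_hat[OF W(2) a aD wa] by metis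
qed

lemma mlen_eq_mlen_pred:
  "mlen d n n' b c m = mlen (d - 1) n n' (b(i := b i - 1)) (c(j := c j - 1)) (m(i := (m i)(j := m i j - 1)))
    + msLG n' m (i - 1) j + msGL n m (i + 1) j + (b i - 1)"
proof -
  have W: "wlong d n n' b c m \<in> dcoset d n n' b c m" "blockwise_decreasing d b c (wlong d n n' b c m)"
    using wlong_blockwise_decreasing[OF m b c] by auto
  have p: "wlong d n n' b c m permutes {1..d}" using blockwise_decreasing_permutes[OF W(2)] .
  then have "hat (wlong d n n' b c m) a permutes {1..d - 1}"
    using hat_permutes Blk_subset[of i n b] i a b by auto
  with p show ?thesis
    unfolding mlen_def hat_wlong[symmetric]
    using card_inversions_blockwise_decreasing_hat[OF W(2) b c i j a wa] W(1)
    by (simp add: clen_eq_card_inversions dcoset_def)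
qed

end

theorem proposition2p7:
  fixes d n n' i j a :: nat and b c :: "nat \<Rightarrow> nat" and m :: "nat \<Rightarrow> nat \<Rightarrow> nat"
  assumes "d \<ge> 1"
    and "(\<Sum>k\<in>{1..n}. b k) = d" and "(\<Sum>k\<in>{1..n'}. c k) = d"
    and "m \<in> matset n n' b c"
    and "i \<in> {1..n}" and "j \<in> {1..n'}"
    and "a \<in> Blk b i" and "wlong d n n' b c m a \<in> Blk c j"
  shows "hat (wlong d n n' b c m) a
           = wlong (d - 1) n n' (b(i := b i - 1)) (c(j := c j - 1)) (m(i := (m i)(j := m i j - 1)))
       \<and> int (mlen d n n' b c m)
           - int (mlen (d - 1) n n' (b(i := b i - 1)) (c(j := c j - 1)) (m(i := (m i)(j := m i j - 1))))
           = int (msLG n' m i j) + int (msGL n m i j) - int (m i j) - 1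
       \<and> int (mlen d n n' b c m)
           - int (mlen (d - 1) n n' (b(i := b i - 1)) (c(j := c j - 1)) (m(i := (m i)(j := m i j - 1))))
           = int (msLG n' m (i - 1) j) + int (msGL n m (i + 1) j) + int (b i) - 1
       \<and> int (mlen d n n' b c m)
           - int (mlen (d - 1) n n' (b(i := b i - 1)) (c(j := c j - 1)) (m(i := (m i)(j := m i j - 1))))
           = int (msLG n' m i (j + 1)) + int (msGL n m i (j - 1)) + int (c j) - 1"
proof -
  have "1 \<le> b i" using mem_BlkD[OF assms(7)] by simp
  with mlen_eq_mlen_pred[OF assms(2-8)] msLG_msGL_row[OF assms(4-6)] msLG_msGL_col[OF assms(4-6)]
  show ?thesis using hat_wlong[OF assms(2-8)] by simp
qed

end
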